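(* Let $\varepsilon\ge0$, $\mathcal L'\subseteq\mathcal L$, $\mathcal J'\subseteq\mathcal J$. If $B=\mathcal L'\cup\mathcal J'$ is a basis of $\mathrm{LP}(\theta,\varepsilon)$, then its basic solution $x\in\mathbb R^L$ satisfies, for $(ij)\in\mathcal L$, $$x_{ij}=\begin{cases}\sum_{k\in\mathsf C(\mathcal T(i))}\lambda_k-\sum_{\ell\in\mathsf S(\mathcal T(i))}(\mu_\ell-\varepsilon)&\text{if } i\text{ is a child of } j\text{ in }\mathcal G(\mathcal L',\mathcal J'),\\ \sum_{\ell\in\mathsf S(\mathcal T(j))}(\mu_\ell-\varepsilon)-\sum_{k\in\mathsf C(\mathcal T(j))}\lambda_k&\text{if } i\text{ is the parent of } j\text{ in }\mathcal G(\mathcal L',\mathcal J'),\\ 0&\text{if }(ij)\in\mathcal L\setminus\mathcal L'.\end{cases}$$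
   Context: $\mathcal I=\{1,\dots,I\}$ and $\mathcal J=\{1,\dots,J\}$ are disjoint node sets, $\mathcal L\subseteq\mathcal I\times\mathcal J$, $L=|\mathcal L|$, $\mathcal S_i=\{j:(ij)\in\mathcal L\}$, $\mathcal C_j=\{i:(ij)\in\mathcal L\}$. For $\lambda\in\mathbb R^I_{>0}$, $\mu\in\mathbb R^J_{>0}$, $\theta\in\mathbb R^L_{\ge0}$, $\mathrm{LP}(\theta,\varepsilon)$ in standard form is: maximize $\sum\theta_{ij}x_{ij}$ s.t. $\sum_{j\in\mathcal S_i}x_{ij}=\lambda_i$ ($i\in\mathcal I$), $\sum_{i\in\mathcal C_j}x_{ij}+\sigma_j=\mu_j-\varepsilon$ ($j\in\mathcal J$), $x,\sigma\ge0$, with variables indexed by $\mathcal L\cup\mathcal J$. A basis is $B\subseteq\mathcal L\cup\mathcal J$ with $|B|=I+J$ and invertible corresponding column submatrix; the basic solution is the unique solution of the equality constraints with all variables outside $B$ equal to $0$. $\mathcal G(\mathcal L',\mathcal J')$ is the subgraph of the bipartite graph $(\mathcal I\cup\mathcal J,\mathcal L)$ with edge set $\mathcal L'$; when $B$ is a basis it is a spanning forest (acyclic, containing all nodes, each tree containing exactly one node of $\mathcal J'$), and each tree is rooted at its node in $\mathcal J'$, which defines parent/child relations. $\mathcal T(v)$ is the subtree rooted at node $v$ including $v$, $\mathsf C(\mathcal T(v))=\mathcal T(v)\cap\mathcal I$, $\mathsf S(\mathcal T(v))=\mathcal T(v)\cap\mathcal J$. *)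

theory Defs
  imports Complex_Main
begin

(* Customer nodes i \<in> {1..I} are encoded as Inl i, server nodes j \<in> {1..J} as Inr j.
   LP variables: x_ij is Inl (i,j) for (i,j) \<in> L, slack \<sigma>_j is Inr j.
   Constraint rows: Inl i (for i \<in> {1..I}), Inr j (for j \<in> {1..J}). *)

type_synonym var = "(nat \<times> nat) + nat"
type_synonym row = "nat + nat"
type_synonym node = "nat + nat"

definition lp_vars :: "nat \<Rightarrow> (nat \<times> nat) set \<Rightarrow> var set" where
  "lp_vars J L = Inl ` L \<union> Inr ` {1..J}"

definition lp_rows :: "nat \<Rightarrow> nat \<Rightarrow> row set" where
  "lp_rows I J = Inl ` {1..I} \<union> Inr ` {1..J}"

fun lp_matrix :: "row \<Rightarrow> var \<Rightarrow> real" where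
  "lp_matrix (Inl i) (Inl (i', j)) = (if i = i' then 1 else 0)"
| "lp_matrix (Inl i) (Inr j) = 0"
| "lp_matrix (Inr j) (Inl (i, j')) = (if j = j' then 1 else 0)"
| "lp_matrix (Inr j) (Inr j') = (if j = j' then 1 else 0)"

fun lp_rhs :: "(nat \<Rightarrow> real) \<Rightarrow> (nat \<Rightarrow> real) \<Rightarrow> real \<Rightarrow> row \<Rightarrow> real" where
  "lp_rhs lam mu eps (Inl i) = lam i"
| "lp_rhs lam mu eps (Inr j) = mu j - eps"

definition is_basis :: "nat \<Rightarrow> nat \<Rightarrow> (nat \<times> nat) set \<Rightarrow> var set \<Rightarrow> bool" where
  "is_basis I J L B \<longleftrightarrow>
     B \<subseteq> lp_vars J L \<and> card B = I + J \<and>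
     (\<exists>M :: var \<Rightarrow> row \<Rightarrow> real.
        (\<forall>r\<in>lp_rows I J. \<forall>r'\<in>lp_rows I J.
            (\<Sum>c\<in>B. lp_matrix r c * M c r') = (if r = r' then 1 else 0)) \<and>
        (\<forall>c\<in>B. \<forall>c'\<in>B.
            (\<Sum>r\<in>lp_rows I J. M c r * lp_matrix r c') = (if c = c' then 1 else 0)))"

definition basic_solution ::
  "nat \<Rightarrow> nat \<Rightarrow> (nat \<times> nat) set \<Rightarrow> (nat \<Rightarrow> real) \<Rightarrow> (nat \<Rightarrow> real) \<Rightarrow> real \<Rightarrow> var set \<Rightarrow> var \<Rightarrow> real"
  where
  "basic_solution I J L lam mu eps B =
     (THE y. (\<forall>r\<in>lp_rows I J. (\<Sum>v\<in>lp_vars J L. lp_matrix r v * y v) = lp_rhs lam mu eps r)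
           \<and> (\<forall>v. v \<notin> B \<longrightarrow> y v = 0))"

definition gedges :: "(nat \<times> nat) set \<Rightarrow> (node \<times> node) set" where
  "gedges L' = {(Inl i, Inr j) | i j. (i, j) \<in> L'} \<union> {(Inr j, Inl i) | i j. (i, j) \<in> L'}"

definition roots :: "nat set \<Rightarrow> node set" where
  "roots J' = Inr ` J'"

definition depth :: "(nat \<times> nat) set \<Rightarrow> nat set \<Rightarrow> node \<Rightarrow> nat" where
  "depth L' J' v = (LEAST n. \<exists>r\<in>roots J'. (v, r) \<in> gedges L' ^^ n)"

(* parent relation of the rooted forest: (v, w) means w is the parent of v,
   i.e. w is the neighbour of v that is one step closer to the root *)
definition parent_rel :: "(nat \<times> nat) set \<Rightarrow> nat set \<Rightarrow> (node \<times> node) set" where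
  "parent_rel L' J' = {(v, w). (v, w) \<in> gedges L' \<and> v \<notin> roots J' \<and>
       (\<exists>r\<in>roots J'. (v, r) \<in> (gedges L')\<^sup>*) \<and> depth L' J' v = depth L' J' w + 1}"

definition is_child :: "(nat \<times> nat) set \<Rightarrow> nat set \<Rightarrow> node \<Rightarrow> node \<Rightarrow> bool" where
  "is_child L' J' v w \<longleftrightarrow> (v, w) \<in> parent_rel L' J'"

definition subtree :: "(nat \<times> nat) set \<Rightarrow> nat set \<Rightarrow> node \<Rightarrow> node set" where
  "subtree L' J' v = {u. (u, v) \<in> (parent_rel L' J')\<^sup>*}"

(* C(T) = T \<inter> I and S(T) = T \<inter> J *)
definition Cnodes :: "node set \<Rightarrow> nat set" where
  "Cnodes T = {k. Inl k \<in> T}"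

definition Snodes :: "node set \<Rightarrow> nat set" where
  "Snodes T = {l. Inr l \<in> T}"

end

theory Submission imports Defs begin

(* Sum the equality constraints over the rows of the subtree T(v) of a child v of w, with
   sign +1 on customer rows and -1 on server rows.  A basic edge variable with both or neither
   endpoint in T cancels, slack variables of T vanish because T contains no root, and nonbasic
   variables are 0; since v has a unique parent, the only edge leaving T is vw, so what remains
   is +-x_vw.  Uniqueness of parents is where the basis property enters: two parents w1, w2
   of v would give two different basis-supported solutions of A y = e_v, obtained by walking
   from v to a root through w1 resp. w2. *)

definition reaches_root :: "(nat \<times> nat) set \<Rightarrow> nat set \<Rightarrow> node \<Rightarrow> bool" where
  "reaches_root L' J' u \<longleftrightarrow> (\<exists>r\<in>roots J'. (u, r) \<in> (gedges L')\<^sup>*)"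

lemma mem_gedges_iff:
  "(u, w) \<in> gedges L' \<longleftrightarrow>
   (\<exists>a b. (a, b) \<in> L' \<and> (u = Inl a \<and> w = Inr b \<or> u = Inr b \<and> w = Inl a))"
  unfolding gedges_def by auto

lemma gedges_sym: "(u, w) \<in> gedges L' \<Longrightarrow> (w, u) \<in> gedges L'"
  unfolding mem_gedges_iff by blast

lemma gedges_isl_iff: "(u, w) \<in> gedges L' \<Longrightarrow> isl u \<longleftrightarrow> \<not> isl w"
  unfolding mem_gedges_iff by auto

lemma finite_gedges: "finite L' \<Longrightarrow> finite (gedges L')"
proof -
  assume "finite L'"
  moreover have "gedges L' = (\<lambda>(i, j). (Inl i, Inr j)) ` L' \<union> (\<lambda>(i, j). (Inr j, Inl i)) ` L'"
    unfolding gedges_def by auto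
  ultimately show ?thesis by simp
qed

lemma walk_to_root_parity:
  "(u, r) \<in> gedges L' ^^ n \<Longrightarrow> r \<in> roots J' \<Longrightarrow> even n \<longleftrightarrow> \<not> isl u"
proof (induction n arbitrary: u)
  case 0
  then show ?case by (auto simp: roots_def)
next
  case (Suc n)
  then obtain y where "(u, y) \<in> gedges L'" "(y, r) \<in> gedges L' ^^ n"
    by (blast dest: relpow_Suc_D2)
  with Suc show ?case using gedges_isl_iff by fastforce
qed

lemma depth_walk_to_root:
  assumes "reaches_root L' J' u"
  shows "\<exists>r\<in>roots J'. (u, r) \<in> gedges L' ^^ depth L' J' u"
proof -
  from assms have "\<exists>n. \<exists>r\<in>roots J'. (u, r) \<in> gedges L' ^^ n"
    unfolding reaches_root_def rtrancl_power by blast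
  then show ?thesis unfolding depth_def by (rule LeastI_ex)
qed

lemma depth_le: "(u, r) \<in> gedges L' ^^ n \<Longrightarrow> r \<in> roots J' \<Longrightarrow> depth L' J' u \<le> n"
  unfolding depth_def by (rule Least_le) blast

lemma even_depth_iff: "reaches_root L' J' u \<Longrightarrow> even (depth L' J' u) \<longleftrightarrow> \<not> isl u"
  using depth_walk_to_root walk_to_root_parity by blast

lemma depth_root: "u \<in> roots J' \<Longrightarrow> depth L' J' u = 0"
  using depth_le[where r = u and n = 0] by simp

lemma root_if_depth_eq_0: "reaches_root L' J' u \<Longrightarrow> depth L' J' u = 0 \<Longrightarrow> u \<in> roots J'"
  using depth_walk_to_root[of L' J' u] by auto

lemma reaches_root_gedges:
  assumes "(u, w) \<in> gedges L'" "reaches_root L' J' w"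
  shows "reaches_root L' J' u" "depth L' J' u \<le> depth L' J' w + 1"
proof -
  obtain r where r: "r \<in> roots J'" "(w, r) \<in> gedges L' ^^ depth L' J' w"
    using depth_walk_to_root[OF assms(2)] by blast
  then have "(u, r) \<in> gedges L' ^^ Suc (depth L' J' w)"
    using assms(1) by (blast intro: relpow_Suc_I2)
  then show "reaches_root L' J' u" "depth L' J' u \<le> depth L' J' w + 1"
    using r depth_le unfolding reaches_root_def rtrancl_power by fastforce+
qed

lemma parent_relD:
  assumes "(v, w) \<in> parent_rel L' J'"
  shows "(v, w) \<in> gedges L'" "reaches_root L' J' v" "reaches_root L' J' w" "v \<notin> roots J'"
    "depth L' J' v = Suc (depth L' J' w)"
proof -
  show vw: "(v, w) \<in> gedges L'" and v: "reaches_root L' J' v" "v \<notin> roots J'"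
    "depth L' J' v = Suc (depth L' J' w)"
    using assms unfolding parent_rel_def reaches_root_def by auto
  show "reaches_root L' J' w" using reaches_root_gedges(1)[OF gedges_sym[OF vw] v(1)] .
qed

lemma parent_relI:
  assumes "(v, w) \<in> gedges L'" "reaches_root L' J' v" "depth L' J' v = depth L' J' w + 1"
  shows "(v, w) \<in> parent_rel L' J'"
  using assms depth_root[of v J' L'] unfolding parent_rel_def reaches_root_def by force

lemma parent_exists:
  assumes "reaches_root L' J' u" "u \<notin> roots J'"
  obtains w where "(u, w) \<in> parent_rel L' J'"
proof -
  obtain r where r: "r \<in> roots J'" "(u, r) \<in> gedges L' ^^ depth L' J' u"
    using depth_walk_to_root[OF assms(1)] by blast
  obtain n where n: "depth L' J' u = Suc n"
    using root_if_depth_eq_0 assms by (cases "depth L' J' u") auto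
  with r obtain w where w: "(u, w) \<in> gedges L'" "(w, r) \<in> gedges L' ^^ n"
    by (metis relpow_Suc_E2)
  have "reaches_root L' J' w" using w r unfolding reaches_root_def rtrancl_power by blast
  then have "depth L' J' u = depth L' J' w + 1"
    using depth_le[OF w(2) r(1)] reaches_root_gedges(2)[OF w(1)] n by fastforce
  then show ?thesis using that parent_relI[OF w(1) assms(1)] by blast
qed

text \<open>Depths of adjacent nodes differ by one, by the parity of walks in the bipartite graph.\<close>

lemma gedges_parent_rel_cases:
  assumes uw: "(u, w) \<in> gedges L'" and u: "reaches_root L' J' u"
  shows "(u, w) \<in> parent_rel L' J' \<or> (w, u) \<in> parent_rel L' J'"
proof -
  have w: "reaches_root L' J' w" using reaches_root_gedges(1)[OF gedges_sym[OF uw] u] .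
  have "depth L' J' u \<noteq> depth L' J' w"
    using even_depth_iff[OF u] even_depth_iff[OF w] gedges_isl_iff[OF uw] by auto
  moreover have "depth L' J' u \<le> depth L' J' w + 1" "depth L' J' w \<le> depth L' J' u + 1"
    using reaches_root_gedges(2)[OF uw w] reaches_root_gedges(2)[OF gedges_sym[OF uw] u] .
  ultimately show ?thesis
    using parent_relI[OF uw u] parent_relI[OF gedges_sym[OF uw] w] by linarith
qed

lemma depth_less_if_parent_trancl:
  "(u, v) \<in> (parent_rel L' J')\<^sup>+ \<Longrightarrow> depth L' J' v < depth L' J' u"
  by (induction rule: trancl_induct) (auto dest: parent_relD(5))

lemma parent_not_in_subtree: "(v, w) \<in> parent_rel L' J' \<Longrightarrow> w \<notin> subtree L' J' v"
proof
  assume "(v, w) \<in> parent_rel L' J'" "w \<in> subtree L' J' v"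
  then have "(w, w) \<in> (parent_rel L' J')\<^sup>+" unfolding subtree_def by (simp add: rtrancl_into_trancl1)
  then show False using depth_less_if_parent_trancl by blast
qed

lemma subtree_memD:
  assumes vw: "(v, w) \<in> parent_rel L' J'" and u: "u \<in> subtree L' J' v"
  shows "reaches_root L' J' u" "u \<notin> roots J'" "u \<in> Domain (gedges L')"
proof -
  have "(u, w) \<in> (parent_rel L' J')\<^sup>+"
    using u vw unfolding subtree_def by (simp add: rtrancl_into_trancl1)
  then obtain q where "(u, q) \<in> parent_rel L' J'" by (blast elim: converse_tranclE)
  then show "reaches_root L' J' u" "u \<notin> roots J'" "u \<in> Domain (gedges L')"
    using parent_relD(1,2,4) by blast+
qed

lemma subtree_boundary:
  assumes sv: "single_valued (parent_rel L' J')" and vw: "(v, w) \<in> parent_rel L' J'"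
    and uz: "(u, z) \<in> gedges L'" and u: "u \<in> subtree L' J' v" and z: "z \<notin> subtree L' J' v"
  shows "u = v \<and> z = w"
proof -
  have uv: "(u, v) \<in> (parent_rel L' J')\<^sup>*" using u unfolding subtree_def by blast
  have "(z, u) \<notin> parent_rel L' J'"
    using z uv unfolding subtree_def by (blast intro: converse_rtrancl_into_rtrancl)
  then have uz_parent: "(u, z) \<in> parent_rel L' J'"
    using gedges_parent_rel_cases[OF uz subtree_memD(1)[OF vw u]] by blast
  show ?thesis
  proof (cases "u = v")
    case True
    then show ?thesis using sv uz_parent vw by (auto dest: single_valuedD)
  next
    case False
    with uv obtain q where "(u, q) \<in> parent_rel L' J'" "(q, v) \<in> (parent_rel L' J')\<^sup>*"
      by (blast elim: converse_rtranclE)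
    then show ?thesis using sv uz_parent z unfolding subtree_def by (auto dest: single_valuedD)
  qed
qed

fun edge_var :: "node \<Rightarrow> node \<Rightarrow> var" where
  "edge_var (Inl a) (Inr b) = Inl (a, b)"
| "edge_var (Inr b) (Inl a) = Inl (a, b)"
| "edge_var _ _ = Inr 0"

fun node_sign :: "node \<Rightarrow> real" where
  "node_sign (Inl _) = 1"
| "node_sign (Inr _) = -1"

lemma edge_var_mem: "(u, w) \<in> gedges L' \<Longrightarrow> edge_var u w \<in> Inl ` L'"
  unfolding mem_gedges_iff by auto

lemma edge_var_eq_iff:
  "(u, z) \<in> gedges L' \<Longrightarrow> (v, w) \<in> gedges L' \<Longrightarrow> edge_var u z = edge_var v w \<longleftrightarrow> {u, z} = {v, w}"
  unfolding mem_gedges_iff by (auto simp: doubleton_eq_iff)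

lemma edge_var_eq_Inl:
  "(u, w) \<in> gedges L' \<Longrightarrow> edge_var u w = Inl (a, b) \<Longrightarrow> {u, w} = {Inl a, Inr b}"
  unfolding mem_gedges_iff by auto

lemma node_sign_gedges: "(u, w) \<in> gedges L' \<Longrightarrow> node_sign u + node_sign w = 0"
  unfolding mem_gedges_iff by auto

lemma sum_mult_of_bool_eq_point:
  "finite A \<Longrightarrow> (\<Sum>x\<in>A. f x * of_bool (x = a)) = of_bool (a \<in> A) * (f a :: 'b :: semiring_1)"
  by (cases "a \<in> A") (simp_all add: Int_absorb1 disjoint_iff)

lemma lp_matrix_Inl: "lp_matrix r (Inl (a, b)) = of_bool (r = Inl a) + of_bool (r = Inr b)"
  by (cases r) auto

lemma lp_matrix_Inr: "lp_matrix r (Inr b) = of_bool (r = Inr b)"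
  by (cases r) auto

lemma lp_matrix_edge_var:
  "(u, w) \<in> gedges L' \<Longrightarrow> lp_matrix r (edge_var u w) = of_bool (r = u) + of_bool (r = w)"
  unfolding mem_gedges_iff by (auto simp: lp_matrix_Inl)

lemma signed_column_sum_edge_var:
  assumes "finite T" "(u, w) \<in> gedges L'"
  shows "(\<Sum>r\<in>T. node_sign r * lp_matrix r (edge_var u w))
       = of_bool (u \<in> T) * node_sign u + of_bool (w \<in> T) * node_sign w"
  using assms by (simp add: lp_matrix_edge_var distrib_left sum.distrib sum_mult_of_bool_eq_point
      del: sum_mult_of_bool_eq)

lemma signed_column_sum_Inr:
  "finite T \<Longrightarrow> (\<Sum>r\<in>T. node_sign r * lp_matrix r (Inr b)) = - of_bool (Inr b \<in> T)"
  by (simp add: lp_matrix_Inr sum_mult_of_bool_eq_point del: sum_mult_of_bool_eq)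

lemma signed_rhs_sum:
  assumes "finite T"
  shows "(\<Sum>r\<in>T. node_sign r * lp_rhs lam mu eps r)
       = (\<Sum>k\<in>Cnodes T. lam k) - (\<Sum>l\<in>Snodes T. mu l - eps)"
proof -
  have T: "T = Inl ` Cnodes T \<union> Inr ` Snodes T"
    unfolding Cnodes_def Snodes_def by (auto intro: sumE)
  have "finite (Cnodes T)" "finite (Snodes T)"
    using finite_vimageI[OF assms, of Inl] finite_vimageI[OF assms, of Inr]
    by (simp_all add: Cnodes_def Snodes_def vimage_def)
  then have "(\<Sum>r\<in>T. node_sign r * lp_rhs lam mu eps r)
      = (\<Sum>r\<in>Inl ` Cnodes T. node_sign r * lp_rhs lam mu eps r)
      + (\<Sum>r\<in>Inr ` Snodes T. node_sign r * lp_rhs lam mu eps r)"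
    by (subst T, intro sum.union_disjoint) auto
  also have "\<dots> = (\<Sum>k\<in>Cnodes T. lam k) - (\<Sum>l\<in>Snodes T. mu l - eps)"
    by (simp add: sum.reindex sum_negf[symmetric])
  finally show ?thesis .
qed

lemma left_inverse_kernel_zero:
  fixes A :: "'r \<Rightarrow> 'c \<Rightarrow> 'a :: comm_ring_1"
  assumes M: "\<forall>c\<in>C. \<forall>c'\<in>C. (\<Sum>r\<in>R. M c r * A r c') = (if c = c' then 1 else 0)"
    and "finite C" and Ay: "\<forall>r\<in>R. (\<Sum>c\<in>C. A r c * y c) = 0" and c: "c \<in> C"
  shows "y c = 0"
proof -
  have "y c = (\<Sum>c'\<in>C. (if c = c' then 1 else 0) * y c')"
    using c \<open>finite C\<close> by (simp add: of_bool_def[symmetric] Int_absorb1)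
  also have "\<dots> = (\<Sum>c'\<in>C. (\<Sum>r\<in>R. M c r * A r c') * y c')"
    using M c by simp
  also have "\<dots> = (\<Sum>r\<in>R. M c r * (\<Sum>c'\<in>C. A r c' * y c'))"
    by (simp add: sum_distrib_left sum_distrib_right sum.swap[of _ C] mult_ac)
  also have "\<dots> = 0" using Ay by simp
  finally show ?thesis .
qed

lemma right_inverse_solves:
  fixes A :: "'r \<Rightarrow> 'c \<Rightarrow> 'a :: comm_ring_1"
  assumes M: "\<forall>r\<in>R. \<forall>r'\<in>R. (\<Sum>c\<in>C. A r c * M c r') = (if r = r' then 1 else 0)"
    and "finite R" and r: "r \<in> R"
  shows "(\<Sum>c\<in>C. A r c * (\<Sum>r'\<in>R. M c r' * b r')) = b r"
proof -
  have "(\<Sum>c\<in>C. A r c * (\<Sum>r'\<in>R. M c r' * b r')) = (\<Sum>r'\<in>R. (\<Sum>c\<in>C. A r c * M c r') * b r')"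
    by (simp add: sum_distrib_left sum_distrib_right sum.swap[of _ C] mult_ac)
  also have "\<dots> = (\<Sum>r'\<in>R. (if r = r' then 1 else 0) * b r')"
    using M r by simp
  also have "\<dots> = b r" using r \<open>finite R\<close> by (simp add: of_bool_def[symmetric] Int_absorb1)
  finally show ?thesis .
qed

locale lp_forest =
  fixes I J :: nat and L L' :: "(nat \<times> nat) set" and J' :: "nat set"
  assumes L_sub: "L \<subseteq> {1..I} \<times> {1..J}" and L'_sub: "L' \<subseteq> L" and J'_sub: "J' \<subseteq> {1..J}"
begin

abbreviation basis_vars :: "var set" where
  "basis_vars \<equiv> Inl ` L' \<union> Inr ` J'"

lemma finite_L: "finite L"
  using L_sub finite_subset by blast

lemma finite_lp_vars: "finite (lp_vars J L)"
  unfolding lp_vars_def using finite_L by simp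

lemma basis_vars_subset: "basis_vars \<subseteq> lp_vars J L"
  unfolding lp_vars_def using L'_sub J'_sub by auto

lemma finite_basis_vars: "finite basis_vars"
  using basis_vars_subset finite_lp_vars by (rule finite_subset)

lemma gedges_lp_rows: "(u, w) \<in> gedges L' \<Longrightarrow> u \<in> lp_rows I J"
  unfolding mem_gedges_iff lp_rows_def using L'_sub L_sub by fastforce

lemma subtree_subset_lp_rows:
  "(v, w) \<in> parent_rel L' J' \<Longrightarrow> subtree L' J' v \<subseteq> lp_rows I J"
  using subtree_memD(3) gedges_lp_rows by blast

lemma finite_subtree: "(v, w) \<in> parent_rel L' J' \<Longrightarrow> finite (subtree L' J' v)"
proof -
  have "finite L'" using L'_sub finite_L by (rule finite_subset)
  then have "finite (Domain (gedges L'))" by (simp add: finite_gedges finite_Domain)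
  moreover assume "(v, w) \<in> parent_rel L' J'"
  ultimately show ?thesis using subtree_memD(3) by (meson finite_subset subsetI)
qed

lemma sum_lp_vars_supported:
  fixes y :: "var \<Rightarrow> real"
  assumes "\<forall>c. c \<notin> basis_vars \<longrightarrow> y c = 0"
  shows "(\<Sum>c\<in>lp_vars J L. f c * y c) = (\<Sum>c\<in>basis_vars. f c * y c)"
  by (rule sum.mono_neutral_right[OF finite_lp_vars basis_vars_subset]) (use assms in simp)

definition basic_preimage :: "node \<Rightarrow> (var \<Rightarrow> real) \<Rightarrow> bool" where
  "basic_preimage u y \<longleftrightarrow> (\<forall>c. c \<notin> basis_vars \<longrightarrow> y c = 0) \<and>
     (\<forall>r. (\<Sum>c\<in>lp_vars J L. lp_matrix r c * y c) = of_bool (r = u))"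

definition vanishes_beyond_depth :: "nat \<Rightarrow> (var \<Rightarrow> real) \<Rightarrow> bool" where
  "vanishes_beyond_depth n y \<longleftrightarrow>
     (\<forall>a b. y (Inl (a, b)) \<noteq> 0 \<longrightarrow> depth L' J' (Inl a) \<le> n \<and> depth L' J' (Inr b) \<le> n)"

lemma vanishes_beyond_depth_edge_var:
  assumes "vanishes_beyond_depth n y" "(u, w) \<in> gedges L'" "n < depth L' J' u"
  shows "y (edge_var u w) = 0"
  using assms unfolding vanishes_beyond_depth_def mem_gedges_iff by force

lemma basic_preimage_root: "b \<in> J' \<Longrightarrow> basic_preimage (Inr b) (\<lambda>c. of_bool (c = Inr b))"
  using basis_vars_subset
  by (auto simp: basic_preimage_def lp_matrix_Inr finite_lp_vars sum_mult_of_bool_eq_point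
      simp del: sum_mult_of_bool_eq)

lemma basic_preimage_parent:
  assumes y: "basic_preimage w y" and vw: "(v, w) \<in> gedges L'"
  shows "basic_preimage v (\<lambda>c. of_bool (c = edge_var v w) - y c)"
proof -
  have e: "edge_var v w \<in> basis_vars" using edge_var_mem[OF vw] by blast
  then have "(\<Sum>c\<in>lp_vars J L. lp_matrix r c * (of_bool (c = edge_var v w) - y c)) = of_bool (r = v)"
    for r
    using y basis_vars_subset lp_matrix_edge_var[OF vw]
    by (auto simp: basic_preimage_def right_diff_distrib sum_subtractf finite_lp_vars
        sum_mult_of_bool_eq_point simp del: sum_mult_of_bool_eq)
  with e y show ?thesis unfolding basic_preimage_def by auto
qed

text \<open>Walking from \<open>u\<close> to a root along parents and alternating the signs of the traversed
  edge variables, starting with the root's slack, yields \<open>e\<^sub>u\<close>.\<close>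

lemma exists_basic_preimage:
  "reaches_root L' J' u \<Longrightarrow>
   \<exists>y. basic_preimage u y \<and> vanishes_beyond_depth (depth L' J' u) y"
proof (induction "depth L' J' u" arbitrary: u)
  case 0
  then have "u \<in> Inr ` J'"
    using root_if_depth_eq_0 unfolding roots_def by metis
  then obtain b where "u = Inr b" "b \<in> J'" by blast
  then have "basic_preimage u (\<lambda>c. of_bool (c = Inr b))"
    "vanishes_beyond_depth (depth L' J' u) (\<lambda>c. of_bool (c = Inr b))"
    using basic_preimage_root by (auto simp: vanishes_beyond_depth_def)
  then show ?case by blast
next
  case (Suc n)
  then obtain w where vw: "(u, w) \<in> parent_rel L' J'"
    using parent_exists depth_root by (metis nat.distinct(1))
  note w = parent_relD[OF vw]
  obtain y where y: "basic_preimage w y" "vanishes_beyond_depth n y"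
    using Suc.hyps(1)[OF _ w(3)] Suc.hyps(2) w(5) by auto
  have "depth L' J' (Inl a) \<le> depth L' J' u \<and> depth L' J' (Inr b) \<le> depth L' J' u"
    if nz: "of_bool (Inl (a, b) = edge_var u w) - y (Inl (a, b)) \<noteq> 0" for a b
  proof (cases "Inl (a, b) = edge_var u w")
    case True
    then have "u = Inl a \<and> w = Inr b \<or> u = Inr b \<and> w = Inl a"
      using edge_var_eq_Inl[OF w(1)] by (auto simp: doubleton_eq_iff)
    then show ?thesis using w(5) by auto
  next
    case False
    then have "y (Inl (a, b)) \<noteq> 0" using nz by simp
    then show ?thesis using y(2) w(5) Suc.hyps(2) unfolding vanishes_beyond_depth_def by fastforce
  qed
  then have "vanishes_beyond_depth (depth L' J' u) (\<lambda>c. of_bool (c = edge_var u w) - y c)"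
    unfolding vanishes_beyond_depth_def by blast
  then show ?case using basic_preimage_parent[OF y(1) w(1)] by blast
qed

end

locale basic_forest = lp_forest +
  assumes basis: "is_basis I J L (Inl ` L' \<union> Inr ` J')"
begin

lemma basis_kernel_trivial:
  fixes y :: "var \<Rightarrow> real"
  assumes supp: "\<forall>c. c \<notin> basis_vars \<longrightarrow> y c = 0"
    and Ay: "\<forall>r\<in>lp_rows I J. (\<Sum>c\<in>lp_vars J L. lp_matrix r c * y c) = 0"
  shows "y c = 0"
proof (cases "c \<in> basis_vars")
  case True
  obtain M where "\<forall>c\<in>basis_vars. \<forall>c'\<in>basis_vars.
      (\<Sum>r\<in>lp_rows I J. M c r * lp_matrix r c') = (if c = c' then 1 else 0)"
    using basis unfolding is_basis_def by blast
  then show ?thesis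
    using left_inverse_kernel_zero[where A = lp_matrix and R = "lp_rows I J"] finite_basis_vars True Ay
      sum_lp_vars_supported[OF supp]
    by auto
qed (use supp in blast)

lemma basic_preimage_unique: "basic_preimage u y \<Longrightarrow> basic_preimage u y' \<Longrightarrow> y = y'"
  unfolding basic_preimage_def
  using basis_kernel_trivial[of "\<lambda>c. y c - y' c"]
  by (auto simp: right_diff_distrib sum_subtractf)

lemma basic_solution_unique:
  "\<exists>!y. (\<forall>r\<in>lp_rows I J. (\<Sum>c\<in>lp_vars J L. lp_matrix r c * y c) = lp_rhs lam mu eps r)
      \<and> (\<forall>c. c \<notin> basis_vars \<longrightarrow> y c = 0)" (is "\<exists>!y. ?solves y")
proof (rule ex_ex1I)
  obtain M where M: "\<forall>r\<in>lp_rows I J. \<forall>r'\<in>lp_rows I J.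
      (\<Sum>c\<in>basis_vars. lp_matrix r c * M c r') = (if r = r' then 1 else 0)"
    using basis unfolding is_basis_def by blast
  define y where "y c = (if c \<in> basis_vars then \<Sum>r'\<in>lp_rows I J. M c r' * lp_rhs lam mu eps r' else 0)"
    for c
  have "finite (lp_rows I J)" unfolding lp_rows_def by simp
  then have "(\<Sum>c\<in>lp_vars J L. lp_matrix r c * y c) = lp_rhs lam mu eps r" if "r \<in> lp_rows I J" for r
    using right_inverse_solves[OF M _ that] sum_lp_vars_supported[of y] by (simp add: y_def)
  then have "?solves y" by (simp add: y_def)
  then show "\<exists>y. ?solves y" by blast
next
  show "y = y'" if "?solves y" "?solves y'" for y y'
    using that basis_kernel_trivial[of "\<lambda>c. y c - y' c"]
    by (auto simp: right_diff_distrib sum_subtractf)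
qed

lemma basic_solution_eq:
  "r \<in> lp_rows I J \<Longrightarrow>
   (\<Sum>c\<in>lp_vars J L. lp_matrix r c * basic_solution I J L lam mu eps basis_vars c) = lp_rhs lam mu eps r"
  using theI'[OF basic_solution_unique] unfolding basic_solution_def by blast

lemma basic_solution_nonbasic:
  "c \<notin> basis_vars \<Longrightarrow> basic_solution I J L lam mu eps basis_vars c = 0"
  using theI'[OF basic_solution_unique] unfolding basic_solution_def by blast

text \<open>The basic preimages of \<open>e\<^sub>v\<close> through two parents \<open>w\<^sub>1 \<noteq> w\<^sub>2\<close> differ on the edge
  variable of \<open>v w\<^sub>1\<close>, which lies beyond the depth of both parents.\<close>

lemma single_valued_parent_rel: "single_valued (parent_rel L' J')"
proof (rule single_valuedI, rule ccontr)
  fix v w1 w2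
  assume p1: "(v, w1) \<in> parent_rel L' J'" and p2: "(v, w2) \<in> parent_rel L' J'" and "w1 \<noteq> w2"
  note d1 = parent_relD[OF p1] and d2 = parent_relD[OF p2]
  obtain y1 where y1: "basic_preimage w1 y1" "vanishes_beyond_depth (depth L' J' w1) y1"
    using exists_basic_preimage[OF d1(3)] by blast
  obtain y2 where y2: "basic_preimage w2 y2" "vanishes_beyond_depth (depth L' J' w2) y2"
    using exists_basic_preimage[OF d2(3)] by blast
  define e1 e2 where "e1 = edge_var v w1" and "e2 = edge_var v w2"
  have "(\<lambda>c. of_bool (c = e1) - y1 c) = (\<lambda>c. of_bool (c = e2) - y2 c)"
    using basic_preimage_unique basic_preimage_parent[OF y1(1) d1(1)]
      basic_preimage_parent[OF y2(1) d2(1)] unfolding e1_def e2_def by blast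
  then have "of_bool (e1 = e1) - y1 e1 = of_bool (e1 = e2) - y2 e1" by (rule fun_cong)
  moreover have "e1 \<noteq> e2"
    using edge_var_eq_iff[OF d1(1) d2(1)] \<open>w1 \<noteq> w2\<close> d1(5) unfolding e1_def e2_def
    by (auto simp: doubleton_eq_iff)
  moreover have "y1 e1 = 0" "y2 e1 = 0"
    using vanishes_beyond_depth_edge_var[OF y1(2) d1(1)] vanishes_beyond_depth_edge_var[OF y2(2) d1(1)]
      d1(5) d2(5) unfolding e1_def by auto
  ultimately show False by simp
qed

lemma subtree_signed_column_sum:
  assumes vw: "(v, w) \<in> parent_rel L' J'" and c: "c \<in> basis_vars"
  shows "(\<Sum>r\<in>subtree L' J' v. node_sign r * lp_matrix r c) = of_bool (c = edge_var v w) * node_sign v"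
proof -
  let ?T = "subtree L' J' v"
  have fin: "finite ?T" using finite_subtree[OF vw] .
  have vw_edge: "(v, w) \<in> gedges L'" using parent_relD(1)[OF vw] .
  have "v \<in> ?T" "w \<notin> ?T"
    using parent_not_in_subtree[OF vw] unfolding subtree_def by auto
  from c consider (slack) b where "c = Inr b" "b \<in> J'"
    | (edge) a b where "c = edge_var (Inl a) (Inr b)" "(Inl a, Inr b) \<in> gedges L'"
    unfolding mem_gedges_iff by force
  then show ?thesis
  proof cases
    case slack
    then have "Inr b \<notin> ?T" using subtree_memD(2)[OF vw] unfolding roots_def by blast
    moreover have "c \<noteq> edge_var v w" using slack edge_var_mem[OF vw_edge] by auto
    ultimately show ?thesis using slack signed_column_sum_Inr[OF fin] by simp
  next
    case edge
    let ?u = "Inl a :: node" and ?z = "Inr b :: node"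
    have sum: "(\<Sum>r\<in>?T. node_sign r * lp_matrix r c)
        = of_bool (?u \<in> ?T) * node_sign ?u + of_bool (?z \<in> ?T) * node_sign ?z"
      using signed_column_sum_edge_var[OF fin edge(2)] edge(1) by simp
    show ?thesis
    proof (cases "c = edge_var v w")
      case True
      then have "{?u, ?z} = {v, w}" using edge_var_eq_iff[OF edge(2) vw_edge] edge(1) by simp
      then show ?thesis using sum True \<open>v \<in> ?T\<close> \<open>w \<notin> ?T\<close> by (auto simp: doubleton_eq_iff)
    next
      case False
      have "{?u, ?z} \<noteq> {v, w}" using False edge_var_eq_iff[OF edge(2) vw_edge] edge(1) by simp
      then have "?u \<in> ?T \<longleftrightarrow> ?z \<in> ?T"
        using subtree_boundary[OF single_valued_parent_rel vw] edge(2) gedges_sym[OF edge(2)]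
        by blast
      then show ?thesis using sum False node_sign_gedges[OF edge(2)] by auto
    qed
  qed
qed

lemma subtree_signed_rhs_sum:
  assumes vw: "(v, w) \<in> parent_rel L' J'"
  shows "(\<Sum>r\<in>subtree L' J' v. node_sign r * lp_rhs lam mu eps r)
       = node_sign v * basic_solution I J L lam mu eps basis_vars (edge_var v w)"
proof -
  let ?T = "subtree L' J' v" and ?x = "basic_solution I J L lam mu eps basis_vars"
  have "(\<Sum>r\<in>?T. node_sign r * lp_rhs lam mu eps r)
      = (\<Sum>r\<in>?T. node_sign r * (\<Sum>c\<in>lp_vars J L. lp_matrix r c * ?x c))"
    using basic_solution_eq subtree_subset_lp_rows[OF vw] by (intro sum.cong) auto
  also have "\<dots> = (\<Sum>c\<in>lp_vars J L. (\<Sum>r\<in>?T. node_sign r * lp_matrix r c) * ?x c)"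
    by (simp add: sum_distrib_left sum_distrib_right sum.swap[of _ ?T] mult_ac)
  also have "\<dots> = (\<Sum>c\<in>basis_vars. (\<Sum>r\<in>?T. node_sign r * lp_matrix r c) * ?x c)"
    using basic_solution_nonbasic by (intro sum_lp_vars_supported) blast
  also have "\<dots> = node_sign v * (\<Sum>c\<in>basis_vars. of_bool (c = edge_var v w) * ?x c)"
    using subtree_signed_column_sum[OF vw] by (simp add: sum_distrib_left mult_ac)
  also have "\<dots> = node_sign v * ?x (edge_var v w)"
    using edge_var_mem[OF parent_relD(1)[OF vw]] finite_basis_vars by (simp add: Int_absorb1)
  finally show ?thesis .
qed

lemma basic_solution_parent_edge:
  assumes "(v, w) \<in> parent_rel L' J'"
  shows "node_sign v * basic_solution I J L lam mu eps basis_vars (edge_var v w)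
       = (\<Sum>k\<in>Cnodes (subtree L' J' v). lam k) - (\<Sum>l\<in>Snodes (subtree L' J' v). mu l - eps)"
  using subtree_signed_rhs_sum[OF assms] signed_rhs_sum[OF finite_subtree[OF assms]] by simp

end

theorem lemma2:
  fixes I J :: nat and L L' :: "(nat \<times> nat) set" and J' :: "nat set"
    and lam mu :: "nat \<Rightarrow> real" and theta :: "nat \<times> nat \<Rightarrow> real" and eps :: real
  assumes L_sub: "L \<subseteq> {1..I} \<times> {1..J}"
    and lam_pos: "\<forall>i\<in>{1..I}. lam i > 0"
    and mu_pos: "\<forall>j\<in>{1..J}. mu j > 0"
    and theta_nonneg: "\<forall>l\<in>L. theta l \<ge> 0"
    and eps_nonneg: "eps \<ge> 0"
    and L'_sub: "L' \<subseteq> L"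
    and J'_sub: "J' \<subseteq> {1..J}"
    and basis: "is_basis I J L (Inl ` L' \<union> Inr ` J')"
  shows "\<forall>(i, j)\<in>L.
     let x = basic_solution I J L lam mu eps (Inl ` L' \<union> Inr ` J') (Inl (i, j)) in
     (is_child L' J' (Inl i) (Inr j) \<longrightarrow>
        x = (\<Sum>k\<in>Cnodes (subtree L' J' (Inl i)). lam k)
            - (\<Sum>l\<in>Snodes (subtree L' J' (Inl i)). mu l - eps)) \<and>
     (is_child L' J' (Inr j) (Inl i) \<longrightarrow>
        x = (\<Sum>l\<in>Snodes (subtree L' J' (Inr j)). mu l - eps)
            - (\<Sum>k\<in>Cnodes (subtree L' J' (Inr j)). lam k)) \<and>
     ((i, j) \<notin> L' \<longrightarrow> x = 0)"
proof -
  interpret basic_forest I J L L' J'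
    using L_sub L'_sub J'_sub basis by unfold_locales
  let ?x = "basic_solution I J L lam mu eps basis_vars"
  have "?x (Inl (i, j)) = (\<Sum>k\<in>Cnodes (subtree L' J' (Inl i)). lam k)
      - (\<Sum>l\<in>Snodes (subtree L' J' (Inl i)). mu l - eps)" if "is_child L' J' (Inl i) (Inr j)" for i j
    using basic_solution_parent_edge[of "Inl i" "Inr j" lam mu eps] that by (simp add: is_child_def)
  moreover have "?x (Inl (i, j)) = (\<Sum>l\<in>Snodes (subtree L' J' (Inr j)). mu l - eps)
      - (\<Sum>k\<in>Cnodes (subtree L' J' (Inr j)). lam k)" if "is_child L' J' (Inr j) (Inl i)" for i j
    using basic_solution_parent_edge[of "Inr j" "Inl i" lam mu eps] that by (simp add: is_child_def)
  moreover have "?x (Inl (i, j)) = 0" if "(i, j) \<notin> L'" for i j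
    using that by (intro basic_solution_nonbasic) auto
  ultimately show ?thesis by (auto simp: Let_def)
qed

end
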